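(* Let $(X,Y,\phi)$ be an $L$-context and $X'\subseteq X$, $Y'\subseteq Y$. With $S_1,S_2\colon\mathcal{K}\phi\to\mathcal{K}\phi_{X',Y'}$ and $F_1,F_2\colon\mathcal{K}\phi_{X',Y'}\to\mathcal{K}\phi$ defined by $S_1\mu=(\phi_{X',Y'})^\forall(\phi_{X',Y'})^\exists\mu_{X'}$, $S_2\mu=\big((\phi_{X,Y'})^\forall(\phi_{X,Y'})^\exists\mu\big)_{X'}$, $F_1\mu'=\phi^\forall\phi^\exists\underline{\mu'}$, $F_2\mu'=(\phi_{X,Y'})^\forall(\phi_{X,Y'})^\exists\underline{\mu'}$, the following are equivalent: (i) $S_1$ is an isomorphism of complete $L$-lattices; (ii) $S_2$ is an isomorphism of complete $L$-lattices; (iii) $F_1$ is an isomorphism of complete $L$-lattices; (iv) $F_2$ is an isomorphism of complete $L$-lattices.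
   Context: $L=(L,* )$ is a complete residuated lattice: a complete lattice with bottom $0$ and top $1$, equipped with a commutative associative operation $*$ with unit $1$ satisfying $a*\bigvee_i b_i=\bigvee_i a*b_i$; $\to$ is its residuum ($a*b\le c\iff a\le b\to c$). An $L$-context is a triple $(X,Y,\phi)$ with $X,Y$ sets and $\phi\colon X\times Y\to L$. $L^X$ is the set of maps $X\to L$ with $L$-order $L^X(\mu,\mu')=\bigwedge_{x}(\mu(x)\to\mu'(x))$. $(\phi^\exists\mu)(y)=\bigvee_{x\in X}\mu(x)*\phi(x,y)$, $(\phi^\forall\lambda)(x)=\bigwedge_{y\in Y}(\phi(x,y)\to\lambda(y))$. $\mathcal{K}\phi=\{\mu\in L^X\mid\phi^\forall\phi^\exists\mu=\mu\}$, with the $L$-order inherited from $L^X$; it is a complete $L$-lattice. $\phi_{X',Y'}$ is the restriction of $\phi$ to $X'\times Y'$; $\mu_{X'}$ the restriction of $\mu$ to $X'$; $\underline{\mu'}\in L^X$ the extension of $\mu'\in L^{X'}$ by $0$. An isomorphism of complete $L$-lattices is a bijection $f$ that is $L$-isometric, i.e. $P(p,p')=Q(fp,fp')$ for all $p,p'$. *)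

theory Defs
  imports Main
begin

text \<open>Complete residuated lattice structure on a complete lattice 'l:
  tn is the monoidal operation *, imp its residuum.\<close>
definition crl :: "('l::complete_lattice \<Rightarrow> 'l \<Rightarrow> 'l) \<Rightarrow> ('l \<Rightarrow> 'l \<Rightarrow> 'l) \<Rightarrow> bool" where
  "crl tn imp \<longleftrightarrow>
     (\<forall>a b. tn a b = tn b a) \<and>
     (\<forall>a b c. tn (tn a b) c = tn a (tn b c)) \<and>
     (\<forall>a. tn a top = a) \<and>
     (\<forall>a B. tn a (Sup B) = Sup ((\<lambda>b. tn a b) ` B)) \<and>
     (\<forall>a b c. tn a b \<le> c \<longleftrightarrow> a \<le> imp b c)"

text \<open>Elements of L^X are represented as functions 'a => 'l that are bot (= 0)
  outside X.\<close>
definition LSet :: "'a set \<Rightarrow> ('a \<Rightarrow> 'l::complete_lattice) set" where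
  "LSet X = {\<mu>. \<forall>x. x \<notin> X \<longrightarrow> \<mu> x = bot}"

definition restr :: "'a set \<Rightarrow> ('a \<Rightarrow> 'l::complete_lattice) \<Rightarrow> 'a \<Rightarrow> 'l" where
  "restr X' \<mu> = (\<lambda>x. if x \<in> X' then \<mu> x else bot)"

definition ext0 :: "'a set \<Rightarrow> ('a \<Rightarrow> 'l::complete_lattice) \<Rightarrow> 'a \<Rightarrow> 'l" where
  "ext0 X' \<mu>' = (\<lambda>x. if x \<in> X' then \<mu>' x else bot)"

definition upE :: "('l::complete_lattice \<Rightarrow> 'l \<Rightarrow> 'l) \<Rightarrow> 'a set \<Rightarrow> 'b set \<Rightarrow> ('a \<Rightarrow> 'b \<Rightarrow> 'l)
    \<Rightarrow> ('a \<Rightarrow> 'l) \<Rightarrow> 'b \<Rightarrow> 'l" where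
  "upE tn X Y phi \<mu> = (\<lambda>y. if y \<in> Y then (SUP x\<in>X. tn (\<mu> x) (phi x y)) else bot)"

definition downA :: "('l::complete_lattice \<Rightarrow> 'l \<Rightarrow> 'l) \<Rightarrow> 'a set \<Rightarrow> 'b set \<Rightarrow> ('a \<Rightarrow> 'b \<Rightarrow> 'l)
    \<Rightarrow> ('b \<Rightarrow> 'l) \<Rightarrow> 'a \<Rightarrow> 'l" where
  "downA imp X Y phi lam = (\<lambda>x. if x \<in> X then (INF y\<in>Y. imp (phi x y) (lam y)) else bot)"

definition clo where
  "clo tn imp X Y phi \<mu> = downA imp X Y phi (upE tn X Y phi \<mu>)"

definition Kc :: "('l::complete_lattice \<Rightarrow> 'l \<Rightarrow> 'l) \<Rightarrow> ('l \<Rightarrow> 'l \<Rightarrow> 'l) \<Rightarrow> 'a set \<Rightarrow> 'b set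
    \<Rightarrow> ('a \<Rightarrow> 'b \<Rightarrow> 'l) \<Rightarrow> ('a \<Rightarrow> 'l) set" where
  "Kc tn imp X Y phi = {\<mu> \<in> LSet X. clo tn imp X Y phi \<mu> = \<mu>}"

definition Lord :: "('l::complete_lattice \<Rightarrow> 'l \<Rightarrow> 'l) \<Rightarrow> 'a set \<Rightarrow> ('a \<Rightarrow> 'l) \<Rightarrow> ('a \<Rightarrow> 'l) \<Rightarrow> 'l" where
  "Lord imp X \<mu> \<mu>' = (INF x\<in>X. imp (\<mu> x) (\<mu>' x))"

definition Liso :: "('l::complete_lattice \<Rightarrow> 'l \<Rightarrow> 'l) \<Rightarrow> 'a set \<Rightarrow> ('a \<Rightarrow> 'l) set \<Rightarrow> 'c set \<Rightarrow> ('c \<Rightarrow> 'l) set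
    \<Rightarrow> (('a \<Rightarrow> 'l) \<Rightarrow> ('c \<Rightarrow> 'l)) \<Rightarrow> bool" where
  "Liso imp X1 P X2 Q f \<longleftrightarrow> bij_betw f P Q \<and>
     (\<forall>p\<in>P. \<forall>p'\<in>P. Lord imp X1 p p' = Lord imp X2 (f p) (f p'))"

end

theory Submission
  imports Defs
begin

text \<open>The maps \<open>F\<^sub>1\<close> and \<open>F\<^sub>2\<close> both embed \<open>\<K>\<phi>\<^bsub>X',Y'\<^esub>\<close> into \<open>\<K>\<phi>\<close>
  \<open>L\<close>-isometrically: the closure \<open>\<phi>\<^sup>\<forall>\<phi>\<^sup>\<exists>\<close> is reflective for the \<open>L\<close>-order, i.e.
  \<open>L\<^sup>X(\<phi>\<^sup>\<forall>\<phi>\<^sup>\<exists>\<mu>, \<nu>) = L\<^sup>X(\<mu>, \<nu>)\<close> for closed \<open>\<nu>\<close>, and restriction to \<open>X'\<close> is a left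
  inverse of both. Moreover \<open>S\<^sub>i\<close> is a left inverse of \<open>F\<^sub>i\<close>. So each of the four maps is an
  isomorphism iff the corresponding embedding \<open>F\<^sub>i\<close> is onto, and two embeddings with a common
  left inverse are onto simultaneously.\<close>

locale complete_residuated_lattice =
  fixes tn imp :: "'l::complete_lattice \<Rightarrow> 'l \<Rightarrow> 'l"
  assumes crl: "crl tn imp"
begin

lemma tn_commute: "tn a b = tn b a"
  using crl unfolding crl_def by blast

lemma tn_assoc: "tn (tn a b) c = tn a (tn b c)"
  using crl unfolding crl_def by blast

lemma tn_Sup: "tn a (Sup B) = Sup (tn a ` B)"
  using crl unfolding crl_def by blast

lemma residuation: "tn a b \<le> c \<longleftrightarrow> a \<le> imp b c"
  using crl unfolding crl_def by blast

lemma tn_SUP: "tn a (SUP x\<in>A. f x) = (SUP x\<in>A. tn a (f x))"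
  using tn_Sup[of a "f ` A"] by (simp add: image_image)

lemma tn_bot_right: "tn a bot = bot"
  using tn_Sup[of a "{}"] by simp

lemma tn_bot_left: "tn bot a = bot"
  using tn_bot_right tn_commute by metis

lemma tn_mono_right: "b \<le> b' \<Longrightarrow> tn a b \<le> tn a b'"
  using tn_Sup[of a "{b, b'}"] by (simp add: sup_absorb2) (simp add: le_iff_sup)

lemma tn_mono_left: "a \<le> a' \<Longrightarrow> tn a b \<le> tn a' b"
  using tn_mono_right tn_commute by metis

lemma tn_imp_le: "tn (imp b c) b \<le> c"
  using residuation by blast

lemma imp_antimono: "a \<le> a' \<Longrightarrow> imp a' b \<le> imp a b"
  by (meson tn_imp_le order_trans residuation tn_mono_right)

lemma imp_mono_right: "b \<le> b' \<Longrightarrow> imp a b \<le> imp a b'"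
  by (meson tn_imp_le order_trans residuation)

lemma imp_bot_left: "imp bot b = top"
  using residuation[of top bot b] by (simp add: tn_bot_right top_le)

lemma upE_ext0:
  assumes "X' \<subseteq> X"
  shows "upE tn X Y phi (ext0 X' m) = upE tn X' Y phi m"
proof -
  have "(SUP x\<in>X. tn (ext0 X' m x) (phi x y)) = (SUP x\<in>X'. tn (m x) (phi x y))" for y
  proof (rule antisym)
    show "(SUP x\<in>X. tn (ext0 X' m x) (phi x y)) \<le> (SUP x\<in>X'. tn (m x) (phi x y))"
      by (rule SUP_least) (auto simp: ext0_def tn_bot_left intro: SUP_upper)
    show "(SUP x\<in>X'. tn (m x) (phi x y)) \<le> (SUP x\<in>X. tn (ext0 X' m x) (phi x y))"
      using assms by (intro SUP_least SUP_upper2) (auto simp: ext0_def)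
  qed
  then show ?thesis
    unfolding upE_def by (intro ext) presburger
qed

lemma restr_downA: "X' \<subseteq> X \<Longrightarrow> restr X' (downA imp X Y phi l) = downA imp X' Y phi l"
  unfolding restr_def downA_def by (rule ext) auto

lemma restr_clo_ext0:
  "X' \<subseteq> X \<Longrightarrow> restr X' (clo tn imp X Y phi (ext0 X' m)) = clo tn imp X' Y phi m"
  unfolding clo_def by (simp add: upE_ext0 restr_downA)

lemma clo_extensive: "x \<in> X \<Longrightarrow> m x \<le> clo tn imp X Y phi m x"
  unfolding clo_def downA_def upE_def
  by (auto simp: residuation[symmetric] intro!: INF_greatest SUP_upper2)

lemma clo_antimono: "Y' \<subseteq> Y \<Longrightarrow> clo tn imp X Y phi m x \<le> clo tn imp X Y' phi m x"
  unfolding clo_def downA_def upE_def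
  by (auto intro!: INF_greatest INF_lower2)

lemma downA_mono:
  "(\<And>y. y \<in> Y \<Longrightarrow> l y \<le> l' y) \<Longrightarrow> downA imp X Y phi l x \<le> downA imp X Y phi l' x"
  unfolding downA_def by (auto intro!: INF_mono imp_mono_right)

lemma upE_downA_le: "y \<in> Y \<Longrightarrow> upE tn X Y phi (downA imp X Y phi l) y \<le> l y"
  unfolding upE_def downA_def
  by (auto intro!: SUP_least order_trans[OF tn_mono_left tn_imp_le] INF_lower)

lemma downA_upE_downA:
  "downA imp X Y phi (upE tn X Y phi (downA imp X Y phi l)) = downA imp X Y phi l"
proof (rule ext antisym)+
  fix x
  show "downA imp X Y phi (upE tn X Y phi (downA imp X Y phi l)) x \<le> downA imp X Y phi l x"
    by (rule downA_mono) (rule upE_downA_le)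
  show "downA imp X Y phi l x \<le> downA imp X Y phi (upE tn X Y phi (downA imp X Y phi l)) x"
    using clo_extensive[of x X "downA imp X Y phi l" Y phi]
    by (cases "x \<in> X") (simp_all add: clo_def downA_def)
qed

lemma downA_in_Kc: "downA imp X Y phi l \<in> Kc tn imp X Y phi"
  unfolding Kc_def clo_def LSet_def
  by (simp add: downA_upE_downA) (simp add: downA_def)

lemma clo_in_Kc: "clo tn imp X Y phi m \<in> Kc tn imp X Y phi"
  unfolding clo_def by (rule downA_in_Kc)

lemma Kc_clo_eq: "m \<in> Kc tn imp X Y phi \<Longrightarrow> clo tn imp X Y phi m = m"
  by (simp add: Kc_def)

lemma restr_clo_in_Kc: "X' \<subseteq> X \<Longrightarrow> restr X' (clo tn imp X Y phi m) \<in> Kc tn imp X' Y phi"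
  unfolding clo_def by (simp add: restr_downA downA_in_Kc)

lemma Kc_mono:
  assumes "Y' \<subseteq> Y"
  shows "Kc tn imp X Y' phi \<subseteq> Kc tn imp X Y phi"
proof
  fix m
  assume "m \<in> Kc tn imp X Y' phi"
  then have m: "m \<in> LSet X" "clo tn imp X Y' phi m = m"
    by (simp_all add: Kc_def)
  have "clo tn imp X Y phi m x = m x" for x
  proof (cases "x \<in> X")
    case True
    then show ?thesis
      using clo_extensive[OF True, of m Y phi] clo_antimono[OF assms, of X phi m x] m(2)
      by (metis antisym)
  next
    case False
    then show ?thesis
      using m(1) clo_in_Kc[of X Y phi m] by (simp add: Kc_def LSet_def)
  qed
  with m(1) show "m \<in> Kc tn imp X Y phi"
    by (simp add: Kc_def fun_eq_iff)
qed

lemma tn_clo_le_clo: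
  assumes "\<And>x. x \<in> X \<Longrightarrow> tn s (m x) \<le> n x"
  shows "tn s (clo tn imp X Y phi m x) \<le> clo tn imp X Y phi n x"
proof (cases "x \<in> X")
  case True
  let ?c = "INF y\<in>Y. imp (phi x y) (upE tn X Y phi m y)"
  have "tn (tn s ?c) (phi x y) \<le> upE tn X Y phi n y" if y: "y \<in> Y" for y
  proof -
    have "tn (tn s ?c) (phi x y) = tn s (tn ?c (phi x y))"
      by (rule tn_assoc)
    also have "\<dots> \<le> tn s (upE tn X Y phi m y)"
      using y by (intro tn_mono_right order_trans[OF tn_mono_left tn_imp_le] INF_lower)
    also have "\<dots> = (SUP x'\<in>X. tn (tn s (m x')) (phi x' y))"
      using y by (simp add: upE_def tn_SUP tn_assoc)
    also have "\<dots> \<le> upE tn X Y phi n y"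
      using y assms by (auto simp: upE_def intro!: SUP_mono tn_mono_left)
    finally show ?thesis .
  qed
  then show ?thesis
    using True unfolding clo_def downA_def by (auto intro!: INF_greatest simp flip: residuation)
next
  case False
  then show ?thesis
    by (simp add: clo_def downA_def tn_bot_right)
qed

lemma Lord_clo_left:
  assumes "n \<in> Kc tn imp X Y phi"
  shows "Lord imp X (clo tn imp X Y phi m) n = Lord imp X m n"
proof (rule antisym)
  show "Lord imp X (clo tn imp X Y phi m) n \<le> Lord imp X m n"
    unfolding Lord_def by (rule INF_mono) (auto intro: imp_antimono clo_extensive)
next
  define s where "s = Lord imp X m n"
  have "tn s (m x) \<le> n x" if "x \<in> X" for x
    using that unfolding s_def Lord_def by (simp add: residuation) (erule INF_lower)
  then have "tn s (clo tn imp X Y phi m x) \<le> n x" for x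
    using tn_clo_le_clo[of X s m n Y phi x] assms by (simp add: Kc_def)
  then show "s \<le> Lord imp X (clo tn imp X Y phi m) n"
    unfolding Lord_def by (auto intro: INF_greatest simp flip: residuation)
qed

lemma Lord_ext0:
  assumes "X' \<subseteq> X"
  shows "Lord imp X (ext0 X' m) n = Lord imp X' m n"
  unfolding Lord_def ext0_def using assms
  by (intro antisym INF_greatest) (auto intro: INF_lower2 INF_lower simp: imp_bot_left)

lemma Lord_restr: "Lord imp X' m (restr X' n) = Lord imp X' m n"
  unfolding Lord_def restr_def by simp

lemma restr_clo_ext0_Kc:
  assumes "X' \<subseteq> X" and "Y' \<subseteq> Z" and q: "q \<in> Kc tn imp X' Y' phi"
  shows "restr X' (clo tn imp X Z phi (ext0 X' q)) = q"
proof
  fix x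
  show "restr X' (clo tn imp X Z phi (ext0 X' q)) x = q x"
  proof (cases "x \<in> X'")
    case True
    have lower: "q x \<le> clo tn imp X Z phi (ext0 X' q) x"
      using clo_extensive[of x X "ext0 X' q" Z phi] True assms(1) by (auto simp: ext0_def)
    have "clo tn imp X Z phi (ext0 X' q) x \<le> clo tn imp X Y' phi (ext0 X' q) x"
      by (rule clo_antimono[OF assms(2)])
    also have "\<dots> = q x"
      using fun_cong[OF restr_clo_ext0[OF assms(1), of Y' phi q], of x] True q
      by (simp add: restr_def Kc_def)
    finally show ?thesis
      using lower True by (simp add: restr_def)
  next
    case False
    then show ?thesis
      using q by (simp add: restr_def Kc_def LSet_def)
  qed
qed

lemma Lord_clo_ext0:
  assumes "X' \<subseteq> X" and "Y' \<subseteq> Z" and "q \<in> Kc tn imp X' Y' phi" and "q' \<in> Kc tn imp X' Y' phi"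
  shows "Lord imp X (clo tn imp X Z phi (ext0 X' q)) (clo tn imp X Z phi (ext0 X' q'))
    = Lord imp X' q q'"
proof -
  have "Lord imp X (clo tn imp X Z phi (ext0 X' q)) (clo tn imp X Z phi (ext0 X' q'))
      = Lord imp X (ext0 X' q) (clo tn imp X Z phi (ext0 X' q'))"
    by (rule Lord_clo_left) (rule clo_in_Kc)
  also have "\<dots> = Lord imp X' q (restr X' (clo tn imp X Z phi (ext0 X' q')))"
    by (simp add: Lord_ext0 Lord_restr assms(1))
  also have "\<dots> = Lord imp X' q q'"
    using restr_clo_ext0_Kc[OF assms(1,2,4)] by simp
  finally show ?thesis .
qed

end

lemma Liso_section_iff:
  assumes "\<And>q. q \<in> Q \<Longrightarrow> g (f q) = q"
    and "\<And>q q'. q \<in> Q \<Longrightarrow> q' \<in> Q \<Longrightarrow> Lord imp X (f q) (f q') = Lord imp X' q q'"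
  shows "Liso imp X' Q X P f \<longleftrightarrow> f ` Q = P"
proof -
  have "inj_on f Q"
    using assms(1) by (metis inj_onI)
  then show ?thesis
    using assms(2) unfolding Liso_def bij_betw_def by auto
qed

lemma Liso_retraction_iff:
  assumes "\<And>q. q \<in> Q \<Longrightarrow> f q \<in> P" and "\<And>p. p \<in> P \<Longrightarrow> g p \<in> Q"
    and "\<And>q. q \<in> Q \<Longrightarrow> g (f q) = q"
    and "\<And>q q'. q \<in> Q \<Longrightarrow> q' \<in> Q \<Longrightarrow> Lord imp X (f q) (f q') = Lord imp X' q q'"
  shows "Liso imp X P X' Q g \<longleftrightarrow> f ` Q = P"
proof
  assume "Liso imp X P X' Q g"
  then have "inj_on g P"
    by (simp add: Liso_def bij_betw_def)
  then have "f (g p) = p" if "p \<in> P" for p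
    using that assms(1-3) by (metis inj_onD)
  then show "f ` Q = P"
    using assms(1,2) by force
next
  assume image: "f ` Q = P"
  then have "inj_on g P" and "g ` P = Q"
    using assms(3) by (auto intro!: inj_onI simp: image_image)
  moreover have "Lord imp X p p' = Lord imp X' (g p) (g p')" if "p \<in> P" "p' \<in> P" for p p'
    using that image assms(3,4) by auto
  ultimately show "Liso imp X P X' Q g"
    unfolding Liso_def bij_betw_def by blast
qed

lemma image_eq_iff_common_left_inverse:
  assumes "\<And>q. q \<in> Q \<Longrightarrow> f q \<in> P" and "\<And>q. q \<in> Q \<Longrightarrow> h q \<in> P"
    and "\<And>q. q \<in> Q \<Longrightarrow> r (f q) = q" and "\<And>q. q \<in> Q \<Longrightarrow> r (h q) = q"
  shows "f ` Q = P \<longleftrightarrow> h ` Q = P"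
proof -
  have "k ` Q = P"
    if onto: "j ` Q = P" and into: "\<And>q. q \<in> Q \<Longrightarrow> k q \<in> P"
      and rj: "\<And>q. q \<in> Q \<Longrightarrow> r (j q) = q" and rk: "\<And>q. q \<in> Q \<Longrightarrow> r (k q) = q" for j k
  proof -
    have "k q = j q" if "q \<in> Q" for q
      using into[OF that] that onto rj rk by (metis imageE)
    then show ?thesis
      using onto by (simp cong: image_cong)
  qed
  then show ?thesis
    using assms by metis
qed

theorem mainTheorem3:
  fixes tn imp :: "'l::complete_lattice \<Rightarrow> 'l \<Rightarrow> 'l"
    and X X' :: "'a set" and Y Y' :: "'b set" and phi :: "'a \<Rightarrow> 'b \<Rightarrow> 'l"
  assumes "crl tn imp" and "X' \<subseteq> X" and "Y' \<subseteq> Y"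
  defines "S1 \<equiv> (\<lambda>\<mu>. clo tn imp X' Y' phi (restr X' \<mu>))"
    and "S2 \<equiv> (\<lambda>\<mu>. restr X' (clo tn imp X Y' phi \<mu>))"
    and "F1 \<equiv> (\<lambda>\<mu>'. clo tn imp X Y phi (ext0 X' \<mu>'))"
    and "F2 \<equiv> (\<lambda>\<mu>'. clo tn imp X Y' phi (ext0 X' \<mu>'))"
  shows "(Liso imp X (Kc tn imp X Y phi) X' (Kc tn imp X' Y' phi) S1
            \<longleftrightarrow> Liso imp X (Kc tn imp X Y phi) X' (Kc tn imp X' Y' phi) S2)
       \<and> (Liso imp X (Kc tn imp X Y phi) X' (Kc tn imp X' Y' phi) S2
            \<longleftrightarrow> Liso imp X' (Kc tn imp X' Y' phi) X (Kc tn imp X Y phi) F1)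
       \<and> (Liso imp X' (Kc tn imp X' Y' phi) X (Kc tn imp X Y phi) F1
            \<longleftrightarrow> Liso imp X' (Kc tn imp X' Y' phi) X (Kc tn imp X Y phi) F2)"
proof -
  interpret complete_residuated_lattice tn imp
    by (fact complete_residuated_lattice.intro[OF assms(1)])
  let ?K = "Kc tn imp X Y phi" and ?K' = "Kc tn imp X' Y' phi"
  have F1: "F1 q \<in> ?K" "restr X' (F1 q) = q" "S1 (F1 q) = q"
    and F2: "F2 q \<in> ?K" "restr X' (F2 q) = q" "S2 (F2 q) = q" if "q \<in> ?K'" for q
  proof -
    have "F1 q \<in> ?K" and "F2 q \<in> Kc tn imp X Y' phi"
      unfolding F1_def F2_def by (rule clo_in_Kc)+
    moreover have "restr X' (F1 q) = q" and "restr X' (F2 q) = q"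
      unfolding F1_def F2_def using restr_clo_ext0_Kc[OF assms(2) _ that] assms(3) by auto
    ultimately show "F1 q \<in> ?K" "restr X' (F1 q) = q" "S1 (F1 q) = q"
      and "F2 q \<in> ?K" "restr X' (F2 q) = q" "S2 (F2 q) = q"
      using that Kc_mono[OF assms(3)] by (auto simp: S1_def S2_def Kc_clo_eq)
  qed
  have S: "S1 p \<in> ?K'" "S2 p \<in> ?K'" for p
    unfolding S1_def S2_def using assms(2) by (simp_all add: clo_in_Kc restr_clo_in_Kc)
  have isometric: "Lord imp X (F1 q) (F1 q') = Lord imp X' q q'"
    "Lord imp X (F2 q) (F2 q') = Lord imp X' q q'" if "q \<in> ?K'" "q' \<in> ?K'" for q q'
    unfolding F1_def F2_def
    by (fact Lord_clo_ext0[OF assms(2,3) that], fact Lord_clo_ext0[OF assms(2) order_refl that])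
  have "Liso imp X ?K X' ?K' S1 \<longleftrightarrow> F1 ` ?K' = ?K"
    by (rule Liso_retraction_iff[OF F1(1) S(1) F1(3) isometric(1)])
  moreover have "Liso imp X ?K X' ?K' S2 \<longleftrightarrow> F2 ` ?K' = ?K"
    by (rule Liso_retraction_iff[OF F2(1) S(2) F2(3) isometric(2)])
  moreover have "Liso imp X' ?K' X ?K F1 \<longleftrightarrow> F1 ` ?K' = ?K"
    by (rule Liso_section_iff[OF F1(3) isometric(1)])
  moreover have "Liso imp X' ?K' X ?K F2 \<longleftrightarrow> F2 ` ?K' = ?K"
    by (rule Liso_section_iff[OF F2(3) isometric(2)])
  moreover have "F1 ` ?K' = ?K \<longleftrightarrow> F2 ` ?K' = ?K"
    by (rule image_eq_iff_common_left_inverse[where r = "restr X'", OF F1(1) F2(1) F1(2) F2(2)])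
  ultimately show ?thesis
    by blast
qed

end
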